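(* Let $v$ be an additive valuation with nonnegative item values shared by $n$ agents, and items $g_1,\dots,g_T$ on a line. For $t\in[T]$ let $B_t=\frac1n v(M_t)-\frac{n-1}{n}\max_{g\in M_t}v(g)$ and $B_t^{\max}=\max_{s\in[t]}B_s$. Then for every $t\in[T]$ there exists a contiguous allocation $A$ of $M_t$ with $\min_{i\in[n]}v(A_i)\ge B^{\max}_t$; letting $X^t$ be the one among these whose vector $\ell(A)=(\ell(A_1),\dots,\ell(A_{n-1}))$ is lexicographically minimum, we have $\ell(X^t_i)\le \ell(X^{t+1}_i)$ for all $t<T$ and $i<n$.
   Context: $M_t=\{g_1,\dots,g_t\}$, $M_{l,r}=\{g_{l+1},\dots,g_r\}$. A contiguous allocation of $M_t$ is $(A_1,\dots,A_n)$ with $A_i=M_{p_{i-1},p_i}$ for some $0=p_0\le p_1\le\dots\le p_{n-1}\le p_n=t$; $\ell(A_i)=p_i$ denotes the index of the last item of block $i$ (with the convention that it equals $p_i$ even if the block is empty). It is a known result (Suksompong) that for additive valuations on a line there always exists a contiguous allocation with $v(A_i)\ge\frac1n v(M)-\frac{n-1}{n}\max_{g\in M}v(g)$ for all $i$. *)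

theory Defs
  imports Complex_Main
begin

text \<open>A contiguous allocation of M_t among n agents is
given by its list of interior cut points ps = [p_1, ..., p_(n-1)]; with p_0 = 0 and
p_n = t, block i is M_{p_(i-1), p_i} = {p_(i-1)+1 .. p_i}, and ell(A_i) = p_i.\<close>

definition cutpts :: "nat \<Rightarrow> nat list \<Rightarrow> nat list" where
  "cutpts t ps = 0 # ps @ [t]"

definition is_contig_alloc :: "nat \<Rightarrow> nat \<Rightarrow> nat list \<Rightarrow> bool" where
  "is_contig_alloc n t ps \<longleftrightarrow> length ps = n - 1 \<and> sorted (cutpts t ps)"

definition block_val :: "(nat \<Rightarrow> real) \<Rightarrow> nat \<Rightarrow> nat list \<Rightarrow> nat \<Rightarrow> real" where
  "block_val v t ps i = (\<Sum>g\<in>{cutpts t ps ! (i - 1)<..cutpts t ps ! i}. v g)"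

definition bound :: "(nat \<Rightarrow> real) \<Rightarrow> nat \<Rightarrow> nat \<Rightarrow> real" where
  "bound v n t = (1 / real n) * (\<Sum>g\<in>{1..t}. v g)
                 - (real n - 1) / real n * Max (v ` {1..t})"

definition bound_max :: "(nat \<Rightarrow> real) \<Rightarrow> nat \<Rightarrow> nat \<Rightarrow> real" where
  "bound_max v n t = Max ((\<lambda>s. bound v n s) ` {1..t})"

definition good_alloc :: "(nat \<Rightarrow> real) \<Rightarrow> nat \<Rightarrow> nat \<Rightarrow> nat list \<Rightarrow> bool" where
  "good_alloc v n t ps \<longleftrightarrow> is_contig_alloc n t ps \<and>
     (\<forall>i\<in>{1..n}. block_val v t ps i \<ge> bound_max v n t)"

definition lexmin_good :: "(nat \<Rightarrow> real) \<Rightarrow> nat \<Rightarrow> nat \<Rightarrow> nat list \<Rightarrow> bool" where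
  "lexmin_good v n t ps \<longleftrightarrow> good_alloc v n t ps \<and>
     (\<forall>qs. good_alloc v n t qs \<longrightarrow> ps = qs \<or> (ps, qs) \<in> lexord {(a, b). a < b})"

end

theory Submission
  imports Defs "HOL-Library.List_Lexorder"
begin

text \<open>Existence: the bound B^max_t equals B_s for some s \<le> t, and Suksompong's allocation of M_s
stays good for M_t once the items g_(s+1), ..., g_t are appended to the last block. It is obtained
greedily: with m the largest item value of M_s and B = B_s, each cut is placed at the shortest
prefix worth at least B, which is then worth at most B + m, and v(M_s) = nB + (n-1)m leaves enough
for the remaining blocks.

Monotonicity: if X is good for M_t and Y is good for M_(t+1), then the componentwise minimum of the
cut vectors is again good for M_t, because each of its blocks contains the corresponding block of
X or of Y, and B^max_t \<le> B^max_(t+1). This minimum is lexicographically at most X, so by minimality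
it equals X, i.e. X \<le> Y componentwise.\<close>

lemma length_cutpts [simp]: "length (cutpts t ps) = length ps + 2"
  by (simp add: cutpts_def)

lemma nth_cutpts_change_end: "j \<le> length ps \<Longrightarrow> cutpts t ps ! j = cutpts s ps ! j"
  by (cases j) (auto simp: cutpts_def nth_append)

lemma nth_cutpts_last: "cutpts t ps ! Suc (length ps) = t"
  by (simp add: cutpts_def nth_append)

lemma sorted_cutpts_le: "sorted (cutpts t ps) \<Longrightarrow> x \<in> set (cutpts t ps) \<Longrightarrow> x \<le> t"
  by (auto simp: cutpts_def sorted_append)

lemma is_contig_alloc_extend:
  "is_contig_alloc n s ps \<Longrightarrow> s \<le> t \<Longrightarrow> is_contig_alloc n t ps"
  by (auto simp: is_contig_alloc_def cutpts_def sorted_append)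

lemma block_val_extend:
  fixes v :: "nat \<Rightarrow> real"
  assumes alloc: "is_contig_alloc n s ps" and "s \<le> t" and nonneg: "\<forall>g\<in>{s<..t}. 0 \<le> v g"
    and i: "i \<in> {1..n}"
  shows "block_val v s ps i \<le> block_val v t ps i"
proof -
  have len: "length ps = n - 1" using alloc by (simp add: is_contig_alloc_def)
  have start: "cutpts t ps ! (i - 1) = cutpts s ps ! (i - 1)"
    using i len by (intro nth_cutpts_change_end) auto
  show ?thesis
  proof (cases "i = n")
    case True
    then have "i = Suc (length ps)" using i len by simp
    then have "cutpts t ps ! i = t" "cutpts s ps ! i = s" by (simp_all add: nth_cutpts_last)
    moreover have "sum v {cutpts s ps ! (i - 1)<..s} \<le> sum v {cutpts s ps ! (i - 1)<..t}"
      by (rule sum_mono2) (use assms(2) nonneg in auto)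
    ultimately show ?thesis using start by (simp add: block_val_def)
  next
    case False
    then have "cutpts t ps ! i = cutpts s ps ! i" using i len by (intro nth_cutpts_change_end) auto
    then show ?thesis using start by (simp add: block_val_def)
  qed
qed

lemma greedy_first_cut:
  fixes v :: "nat \<Rightarrow> real"
  assumes le_m: "\<forall>g\<in>{a<..t}. v g \<le> m" and "0 \<le> B + m" and "a \<le> t"
    and "B \<le> sum v {a<..t}"
  obtains p where "a \<le> p" "p \<le> t" "B \<le> sum v {a<..p}" "sum v {a<..p} \<le> B + m"
proof -
  define P where "P p \<longleftrightarrow> a \<le> p \<and> p \<le> t \<and> B \<le> sum v {a<..p}" for p
  define p where "p = (LEAST p. P p)"
  have "P t" using assms by (simp add: P_def)
  then have Pp: "P p" unfolding p_def by (rule LeastI)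
  have "sum v {a<..p} \<le> B + m"
  proof (cases "p = a")
    case True
    then show ?thesis using assms(2) by simp
  next
    case False
    then obtain q where q: "p = Suc q" "a \<le> q" using Pp by (cases p) (auto simp: P_def)
    have "\<not> P q" using q not_less_Least[of q P] by (simp add: p_def)
    then have "sum v {a<..q} < B" using q Pp by (auto simp: P_def)
    moreover have "{a<..p} = insert p {a<..q}" using q by auto
    moreover have "v p \<le> m" using le_m Pp False by (auto simp: P_def)
    ultimately show ?thesis using q by simp
  qed
  then show thesis using that Pp unfolding P_def by blast
qed

lemma greedy_partition:
  fixes v :: "nat \<Rightarrow> real"
  assumes "\<forall>g\<in>{a<..t}. v g \<le> m" "0 \<le> B + m" "a \<le> t"
    and "real (Suc k) * B + real k * m \<le> sum v {a<..t}"
  shows "\<exists>ps. length ps = k \<and> sorted (a # ps @ [t]) \<and>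
     (\<forall>i<Suc k. B \<le> sum v {(a # ps @ [t]) ! i<..(a # ps @ [t]) ! Suc i})"
  using assms
proof (induction k arbitrary: a)
  case 0
  then show ?case by simp
next
  case (Suc k)
  \<comment> \<open>(k+2)B + (k+1)m = B + (k+1)(B+m)\<close>
  have "B \<le> sum v {a<..t}"
    using Suc.prems(2,4) mult_nonneg_nonneg[of "real (Suc k)" "B + m"] by (simp add: algebra_simps)
  then obtain p where p: "a \<le> p" "p \<le> t" "B \<le> sum v {a<..p}" "sum v {a<..p} \<le> B + m"
    using greedy_first_cut Suc.prems(1-3) by blast
  have "{a<..t} = {a<..p} \<union> {p<..t}" "{a<..p} \<inter> {p<..t} = {}" using p by auto
  then have "sum v {a<..t} = sum v {a<..p} + sum v {p<..t}" by (simp add: sum.union_disjoint)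
  then have "real (Suc k) * B + real k * m \<le> sum v {p<..t}"
    using Suc.prems(4) p(4) by (simp add: algebra_simps)
  moreover have "\<forall>g\<in>{p<..t}. v g \<le> m" using Suc.prems(1) p(1) by auto
  ultimately obtain ps where ps: "length ps = k" "sorted (p # ps @ [t])"
      "\<forall>i<Suc k. B \<le> sum v {(p # ps @ [t]) ! i<..(p # ps @ [t]) ! Suc i}"
    using Suc.IH Suc.prems(2) p(2) by blast
  have "\<forall>i<Suc (Suc k). B \<le> sum v {(a # (p # ps) @ [t]) ! i<..(a # (p # ps) @ [t]) ! Suc i}"
  proof (intro allI impI)
    fix i assume "i < Suc (Suc k)"
    then show "B \<le> sum v {(a # (p # ps) @ [t]) ! i<..(a # (p # ps) @ [t]) ! Suc i}"
      using ps(3) p(3) by (cases i) auto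
  qed
  then show ?case using ps p(1) by (intro exI[of _ "p # ps"]) auto
qed

lemma contig_alloc_ge_bound:
  fixes v :: "nat \<Rightarrow> real"
  assumes n: "1 \<le> n" and s: "1 \<le> s" and nonneg: "\<forall>g\<in>{1..s}. 0 \<le> v g"
  obtains ps where "is_contig_alloc n s ps" "\<forall>i\<in>{1..n}. bound v n s \<le> block_val v s ps i"
proof -
  define m where "m = Max (v ` {1..s})"
  define S where "S = sum v {1..s}"
  define B where "B = bound v n s"
  have items: "{0<..s} = {1..s}" by auto
  have le_m: "\<forall>g\<in>{0<..s}. v g \<le> m" unfolding items m_def by simp
  have "0 \<le> v 1" "v 1 \<le> m" using nonneg le_m s by auto
  moreover have "0 \<le> S" unfolding S_def using nonneg by (intro sum_nonneg) auto
  moreover have "B + m = (S + m) / real n" and S_eq: "S = real n * B + (real n - 1) * m"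
    using n by (simp_all add: B_def bound_def S_def m_def field_simps)
  ultimately have "0 \<le> B + m" using n by simp
  moreover have "real (Suc (n - 1)) * B + real (n - 1) * m \<le> sum v {0<..s}"
    using n S_eq by (simp add: items S_def of_nat_diff)
  ultimately obtain ps where ps: "length ps = n - 1" "sorted (0 # ps @ [s])"
      "\<forall>i<Suc (n - 1). B \<le> sum v {(0 # ps @ [s]) ! i<..(0 # ps @ [s]) ! Suc i}"
    using greedy_partition[OF le_m] s by blast
  have "\<forall>i\<in>{1..n}. B \<le> block_val v s ps i"
  proof
    fix i assume "i \<in> {1..n}"
    then obtain j where "i = Suc j" "j < Suc (n - 1)" by (cases i) auto
    then show "B \<le> block_val v s ps i" using ps(3) by (simp add: block_val_def cutpts_def)
  qed
  with ps that show thesis by (simp add: B_def is_contig_alloc_def cutpts_def)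
qed

lemma bound_max_attained:
  "1 \<le> t \<Longrightarrow> \<exists>s\<in>{1..t}. bound_max v n t = bound v n s"
proof -
  assume "1 \<le> t"
  then have "bound_max v n t \<in> (\<lambda>s. bound v n s) ` {1..t}"
    unfolding bound_max_def by (intro Max_in) auto
  then show ?thesis by auto
qed

lemma bound_max_mono: "1 \<le> t \<Longrightarrow> t \<le> t' \<Longrightarrow> bound_max v n t \<le> bound_max v n t'"
  unfolding bound_max_def by (intro Max_mono) auto

lemma good_alloc_exists:
  fixes v :: "nat \<Rightarrow> real"
  assumes n: "1 \<le> n" and t: "1 \<le> t" and nonneg: "\<forall>g\<in>{1..t}. 0 \<le> v g"
  shows "\<exists>ps. good_alloc v n t ps"
proof -
  obtain s where s: "s \<in> {1..t}" "bound_max v n t = bound v n s"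
    using bound_max_attained t by blast
  have "1 \<le> s" "\<forall>g\<in>{1..s}. 0 \<le> v g" using s nonneg by auto
  then obtain ps where ps: "is_contig_alloc n s ps" "\<forall>i\<in>{1..n}. bound v n s \<le> block_val v s ps i"
    by (rule contig_alloc_ge_bound[OF n])
  have "bound_max v n t \<le> block_val v t ps i" if i: "i \<in> {1..n}" for i
  proof -
    have "block_val v s ps i \<le> block_val v t ps i"
      using s nonneg by (intro block_val_extend[OF ps(1) _ _ i]) auto
    then show ?thesis using ps(2) i s(2) by fastforce
  qed
  moreover have "is_contig_alloc n t ps" using is_contig_alloc_extend[OF ps(1)] s by simp
  ultimately show ?thesis by (auto simp: good_alloc_def)
qed

lemma finite_good_alloc: "finite {ps. good_alloc v n t ps}"
proof (rule finite_subset)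
  show "{ps. good_alloc v n t ps} \<subseteq> {ps. set ps \<subseteq> {0..t} \<and> length ps = n - 1}"
    by (auto simp: good_alloc_def is_contig_alloc_def cutpts_def sorted_append)
  show "finite {ps. set ps \<subseteq> {0..t} \<and> length ps = n - 1}"
    by (rule finite_lists_length_eq) simp
qed

lemma lexmin_good_exists:
  fixes v :: "nat \<Rightarrow> real"
  assumes "1 \<le> n" "1 \<le> t" "\<forall>g\<in>{1..t}. 0 \<le> v g"
  shows "\<exists>ps. lexmin_good v n t ps"
proof -
  let ?G = "{ps. good_alloc v n t ps}"
  have "?G \<noteq> {}" using good_alloc_exists[OF assms] by auto
  then have "Min ?G \<in> ?G" "\<forall>qs\<in>?G. Min ?G \<le> qs"
    using Min_in[OF finite_good_alloc] Min_le[OF finite_good_alloc] by auto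
  then show ?thesis unfolding lexmin_good_def by (auto simp: list_le_def list_less_def)
qed

lemma not_lexord_less_if_ge:
  fixes xs ys :: "'a::linorder list"
  assumes "length xs = length ys" "\<forall>i<length xs. ys ! i \<le> xs ! i"
  shows "(xs, ys) \<notin> lexord {(a, b). a < b}"
  using assms by (auto simp: lexord_take_index_conv not_less[symmetric])

lemma sorted_map2_min:
  fixes xs ys :: "'a::linorder list"
  assumes "sorted xs" "sorted ys" "length xs = length ys"
  shows "sorted (map2 min xs ys)"
  using assms by (auto simp: sorted_iff_nth_mono min_le_iff_disj)

lemma min_interval_superset:
  fixes a a' b b' :: "'a::linorder"
  shows "(if b \<le> b' then {a<..b} else {a'<..b'}) \<subseteq> {min a a'<..min b b'}"
  by (auto simp: min_less_iff_disj)

lemma good_alloc_map2_min: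
  fixes v :: "nat \<Rightarrow> real"
  assumes X: "good_alloc v n t X" and Y: "good_alloc v n t' Y"
    and t: "1 \<le> t" "t \<le> t'" and nonneg: "\<forall>g\<in>{1..t}. 0 \<le> v g"
  shows "good_alloc v n t (map2 min X Y)"
proof -
  define Z where "Z = map2 min X Y"
  have len: "length X = n - 1" "length Y = n - 1"
    using X Y by (simp_all add: good_alloc_def is_contig_alloc_def)
  have cuts: "cutpts t Z = map2 min (cutpts t X) (cutpts t' Y)"
    using len t by (simp add: Z_def cutpts_def)
  have sorted: "sorted (cutpts t Z)"
    unfolding cuts using X Y len
    by (intro sorted_map2_min) (simp_all add: good_alloc_def is_contig_alloc_def)
  have "bound_max v n t \<le> block_val v t Z i" if i: "i \<in> {1..n}" for i
  proof -
    let ?c = "cutpts t X" and ?d = "cutpts t' Y" and ?e = "cutpts t Z"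
    have j: "i < length ?c" "i < length ?d" using i len by auto
    have "?e ! i \<in> set ?e" using j len by (simp add: Z_def)
    then have "?e ! i \<le> t" using sorted sorted_cutpts_le by blast
    then have nonneg_block: "\<forall>g\<in>{?e ! (i - 1)<..?e ! i}. 0 \<le> v g" using nonneg by auto
    have e_nth: "?e ! k = min (?c ! k) (?d ! k)" if "k \<le> i" for k
      using that j by (simp add: cuts)
    show ?thesis
    proof (cases "?c ! i \<le> ?d ! i")
      case True
      have "block_val v t X i \<le> block_val v t Z i"
        unfolding block_val_def using nonneg_block min_interval_superset[of "?c ! i" "?d ! i"] True
        by (intro sum_mono2) (auto simp: e_nth)
      moreover have "bound_max v n t \<le> block_val v t X i" using X i by (simp add: good_alloc_def)
      ultimately show ?thesis by linarith
    next
      case False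
      have "block_val v t' Y i \<le> block_val v t Z i"
        unfolding block_val_def using nonneg_block min_interval_superset[of "?c ! i" "?d ! i"] False
        by (intro sum_mono2) (auto simp: e_nth)
      moreover have "bound_max v n t' \<le> block_val v t' Y i" using Y i by (simp add: good_alloc_def)
      ultimately show ?thesis using bound_max_mono[OF t, of v n] by linarith
    qed
  qed
  then show ?thesis
    using sorted len by (simp add: good_alloc_def is_contig_alloc_def Z_def)
qed

lemma lexmin_good_mono:
  fixes v :: "nat \<Rightarrow> real"
  assumes X: "lexmin_good v n t X" and Y: "lexmin_good v n t' Y"
    and "1 \<le> t" "t \<le> t'" and "\<forall>g\<in>{1..t}. 0 \<le> v g" and i: "i < n - 1"
  shows "X ! i \<le> Y ! i"
proof -
  have len: "length X = n - 1" "length Y = n - 1"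
    using X Y by (simp_all add: lexmin_good_def good_alloc_def is_contig_alloc_def)
  have "good_alloc v n t (map2 min X Y)"
    using X Y unfolding lexmin_good_def by (blast intro: good_alloc_map2_min[OF _ _ assms(3-5)])
  moreover have "(X, map2 min X Y) \<notin> lexord {(a, b). a < b}"
    using len by (intro not_lexord_less_if_ge) auto
  ultimately have "X = map2 min X Y" using X by (auto simp: lexmin_good_def)
  then have "X ! i = map2 min X Y ! i" by (rule arg_cong)
  also have "\<dots> = min (X ! i) (Y ! i)" using i len by simp
  finally show ?thesis by (metis min.cobounded2)
qed

theorem mainTheorem2:
  fixes v :: "nat \<Rightarrow> real" and n T :: nat
  assumes "n \<ge> 1"
    and "\<And>g. g \<in> {1..T} \<Longrightarrow> v g \<ge> 0"
  shows "(\<forall>t\<in>{1..T}. \<exists>ps. good_alloc v n t ps)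
       \<and> (\<forall>t\<in>{1..T}. \<exists>ps. lexmin_good v n t ps)
       \<and> (\<forall>t X Y. 1 \<le> t \<longrightarrow> t < T \<longrightarrow> lexmin_good v n t X \<longrightarrow> lexmin_good v n (t + 1) Y
             \<longrightarrow> (\<forall>i<n - 1. X ! i \<le> Y ! i))"
proof (intro conjI ballI allI impI)
  fix t assume "t \<in> {1..T}"
  then have "1 \<le> t" "\<forall>g\<in>{1..t}. 0 \<le> v g" using assms(2) by auto
  then show "\<exists>ps. good_alloc v n t ps" "\<exists>ps. lexmin_good v n t ps"
    using good_alloc_exists lexmin_good_exists assms(1) by blast+
next
  fix t X Y i
  assume "1 \<le> t" "t < T" "lexmin_good v n t X" "lexmin_good v n (t + 1) Y" "i < n - 1"
  then show "X ! i \<le> Y ! i" using lexmin_good_mono[of v n t X "t + 1" Y i] assms(2) by auto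
qed

end
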